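(* There exists $e\in S$ such that $(g(e))_{g\in\Gamma_f}$ is a basis of $S$ over $S_0$. Moreover, $e$ can be chosen so that $p$ divides none of the elements $p_i(e)$, $0\le i\le p-2$, where $p_i=\frac{1}{|\Gamma_f|}\sum_{g\in\Gamma_f}\chi(g)^{-i}g$.
   Context: $p$ odd prime, $\mathcal{K}$ absolutely unramified complete discretely valued field of characteristic $0$ with perfect residue field $k$, $W=W(k)$, $\chi$ the cyclotomic character of $\Gamma_{\mathcal{K}}$. $\pi=[\varepsilon]-1\in W(R)$ where $\varepsilon$ is a compatible system of $p^n$-th roots of unity ($\varepsilon^{(1)}\ne1$), $S=W[[\pi]]$ with action $g(\pi)=(1+\pi)^{\chi(g)}-1$ of $\Gamma=\mathrm{Gal}(\mathcal{K}(\mu_{p^\infty})/\mathcal{K})$; $\Gamma_f$ is the torsion subgroup of $\Gamma$ (of order $p-1$) and $S_0=S^{\Gamma_f}=W[[\pi_0]]$ with $\pi_0=-p+\sum_{a\in\mathbb{F}_p}[\varepsilon]^a$. *)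

theory Defs
  imports "HOL-Computational_Algebra.Formal_Power_Series"
begin

text \<open>Abstract characterisation of W = W(k), k a perfect field of characteristic p:
  a p-torsion-free, p-adically separated and complete commutative ring whose
  reduction modulo p is a (nonzero) perfect field.\<close>
definition witt_like :: "nat \<Rightarrow> 'w::comm_ring_1 itself \<Rightarrow> bool" where
  "witt_like p _ \<longleftrightarrow>
     (\<forall>x::'w. of_nat p * x = 0 \<longrightarrow> x = 0) \<and>
     \<not> (of_nat p dvd (1::'w)) \<and>
     (\<forall>x::'w. \<not> of_nat p dvd x \<longrightarrow> (\<exists>y. of_nat p dvd (x * y - 1))) \<and>
     (\<forall>x::'w. \<exists>y. of_nat p dvd (y ^ p - x)) \<and>
     (\<forall>x::'w. (\<forall>n. of_nat p ^ n dvd x) \<longrightarrow> x = 0) \<and>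
     (\<forall>s::nat \<Rightarrow> 'w. (\<forall>n. of_nat p ^ n dvd (s (Suc n) - s n)) \<longrightarrow>
        (\<exists>x. \<forall>n. of_nat p ^ n dvd (x - s n)))"

definition winv :: "'w::comm_ring_1 \<Rightarrow> 'w" where
  "winv x = (THE y. x * y = 1)"

definition wbinom :: "'w::comm_ring_1 \<Rightarrow> nat \<Rightarrow> 'w" where
  "wbinom z n = (THE c. of_nat (fact n) * c = (\<Prod>j<n. z - of_nat j))"

text \<open>The power series (1+pi)^zeta - 1.\<close>
definition cyc_sub :: "'w::comm_ring_1 \<Rightarrow> 'w fps" where
  "cyc_sub z = Abs_fps (\<lambda>n. if n = 0 then 0 else wbinom z n)"

text \<open>Action of g with chi(g) = zeta on S = W[[pi]]: pi maps to (1+pi)^zeta - 1.\<close>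
definition gact :: "'w::comm_ring_1 \<Rightarrow> 'w fps \<Rightarrow> 'w fps" where
  "gact z f = fps_compose f (cyc_sub z)"

text \<open>Gamma_f, identified via chi with the (p-1)-st roots of unity of Z_p (= those of W).\<close>
definition Gamma_f :: "nat \<Rightarrow> 'w::comm_ring_1 set" where
  "Gamma_f p = {z. z ^ (p - 1) = 1}"

definition S0 :: "nat \<Rightarrow> 'w::comm_ring_1 fps set" where
  "S0 p = {f. \<forall>z\<in>Gamma_f p. gact z f = f}"

definition proj :: "nat \<Rightarrow> nat \<Rightarrow> 'w::comm_ring_1 fps \<Rightarrow> 'w fps" where
  "proj p i f = fps_const (winv (of_nat (card (Gamma_f p :: 'w set)))) *
      (\<Sum>z\<in>Gamma_f p. fps_const (winv z ^ i) * gact z f)"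

end

theory Submission
  imports Defs "HOL-Number_Theory.Number_Theory"
begin

text \<open>
  \<open>W\<close> is a domain of characteristic zero in which \<open>p\<close> is prime and every element
  prime to \<open>p\<close> is a unit. By \<open>p\<close>-adic completeness, the Teichmueller lift \<open>\<omega>\<close> of a
  primitive root modulo \<open>p\<close> generates the group \<open>\<Gamma>\<^sub>f\<close> of \<open>q\<close>-th roots of unity,
  \<open>q = p - 1\<close>, which is cyclic of order \<open>q\<close>, and \<open>q\<close> is a unit. Roots of unity are
  \<open>p\<close>-adic integers, so \<open>(1 + \<pi>)\<^sup>\<zeta>\<close> has coefficients in \<open>W\<close>, and the differential
  equation \<open>(1 + \<pi>) F' = \<zeta> F\<close> shows that substitution is a group action.

  The projectors \<open>p\<^sub>i\<close> split \<open>S\<close> into \<open>\<chi>\<^sup>i\<close>-eigenspaces. The series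
  \<open>T = p\<^sub>1(\<pi>)\<close> is a \<open>\<chi>\<close>-eigenvector and \<open>\<pi>\<close> times a unit; comparing lowest
  coefficients shows that every \<open>\<chi>\<^sup>i\<close>-eigenvector is \<open>T\<^sup>i\<close> times an invariant, so
  \<open>S\<close> is the direct sum of the \<open>T\<^sup>i S\<^sub>0\<close>, \<open>i < q\<close>. For
  \<open>e = 1 + T + \<dots> + T\<^sup>q\<^sup>-\<^sup>1\<close>, discrete Fourier inversion on \<open>\<Gamma>\<^sub>f\<close> turns this
  decomposition into the basis \<open>(g(e))\<^sub>g\<close>, and \<open>p\<^sub>i(e) = T\<^sup>i\<close> has coefficient \<open>1\<close>
  at \<open>\<pi>\<^sup>i\<close>.
\<close>

unbundle fps_syntax

section \<open>Composition of power series over commutative rings\<close>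

text \<open>The library proves the following facts for integral domains only; their proofs need
  just a commutative ring, which is all that the type class of \<open>W\<close> provides.\<close>

lemma fps_compose_mult_nth:
  fixes a c g :: "'a::comm_ring_1 fps"
  assumes c0: "c $ 0 = 0" and "n \<le> N"
  shows "((a oo c) * g) $ n = (\<Sum>i\<le>N. a $ i * (c ^ i * g) $ n)"
proof -
  have compose_nth: "(a oo c) $ j = (\<Sum>i\<le>N. a $ i * (c ^ i) $ j)" if "j \<le> N" for j
    unfolding fps_compose_nth
    by (rule sum.mono_neutral_left) (use that startsby_zero_power_prefix[OF c0] in auto)
  have "((a oo c) * g) $ n = (\<Sum>j=0..n. \<Sum>i\<le>N. a $ i * ((c ^ i) $ j * g $ (n - j)))"
    unfolding fps_mult_nth using \<open>n \<le> N\<close>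
    by (intro sum.cong refl) (simp add: compose_nth sum_distrib_right mult.assoc)
  also have "\<dots> = (\<Sum>i\<le>N. a $ i * (c ^ i * g) $ n)"
    by (subst sum.swap) (simp add: fps_mult_nth sum_distrib_left)
  finally show ?thesis .
qed

lemma fps_compose_nth_atMost:
  fixes a c :: "'a::comm_ring_1 fps"
  assumes "c $ 0 = 0" and "n \<le> N"
  shows "(a oo c) $ n = (\<Sum>i\<le>N. a $ i * (c ^ i) $ n)"
  using fps_compose_mult_nth[OF assms, of a 1] by simp

lemma fps_compose_mult_distrib':
  fixes a b c :: "'a::comm_ring_1 fps"
  assumes c0: "c $ 0 = 0"
  shows "(a * b) oo c = (a oo c) * (b oo c)"
proof (rule fps_ext)
  fix n
  let ?t = "\<lambda>i k. a $ i * b $ k * (c ^ (i + k)) $ n"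
  have "((a oo c) * (b oo c)) $ n = (\<Sum>i\<le>n. a $ i * ((b oo c) * c ^ i) $ n)"
    using fps_compose_mult_nth[OF c0 order.refl, of a "b oo c"] by (simp add: mult.commute)
  also have "\<dots> = (\<Sum>i\<le>n. \<Sum>k\<le>n. ?t i k)"
    by (simp add: fps_compose_mult_nth[OF c0 order.refl] sum_distrib_left mult.assoc add.commute
        flip: power_add)
  also have "\<dots> = (\<Sum>(i, k)\<in>{(i, k). i + k \<le> n}. ?t i k)"
    unfolding sum.cartesian_product
    by (rule sum.mono_neutral_right)
      (auto simp: startsby_zero_power_prefix[OF c0, rule_format] not_le intro: ccontr)
  also have "\<dots> = (\<Sum>s=0..n. \<Sum>i=0..s. a $ i * b $ (s - i) * (c ^ s) $ n)"
    by (rule sum_pair_less_iff)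
  also have "\<dots> = ((a * b) oo c) $ n"
    by (simp add: fps_compose_nth fps_mult_nth sum_distrib_right)
  finally show "((a * b) oo c) $ n = ((a oo c) * (b oo c)) $ n" ..
qed

lemma fps_compose_power':
  fixes a c :: "'a::comm_ring_1 fps"
  assumes "c $ 0 = 0"
  shows "a ^ n oo c = (a oo c) ^ n"
  by (induction n) (simp_all add: fps_compose_mult_distrib'[OF assms])

lemma fps_compose_assoc':
  fixes a b c :: "'a::comm_ring_1 fps"
  assumes b0: "b $ 0 = 0" and c0: "c $ 0 = 0"
  shows "a oo (b oo c) = (a oo b) oo c"
proof (rule fps_ext)
  fix n
  have bc0: "(b oo c) $ 0 = 0" using b0 by simp
  have "(a oo (b oo c)) $ n = (\<Sum>i\<le>n. \<Sum>j\<le>n. a $ i * ((b ^ i) $ j * (c ^ j) $ n))"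
    by (simp add: fps_compose_nth_atMost[OF bc0 order.refl] fps_compose_power'[OF c0, symmetric]
        fps_compose_nth_atMost[OF c0 order.refl] sum_distrib_left)
  also have "\<dots> = ((a oo b) oo c) $ n"
    by (subst sum.swap) (simp add: fps_compose_nth_atMost[OF c0 order.refl]
        fps_compose_nth_atMost[OF b0] sum_distrib_right mult.assoc)
  finally show "(a oo (b oo c)) $ n = ((a oo b) oo c) $ n" .
qed

lemma fps_compose_deriv':
  fixes a b :: "'a::comm_ring_1 fps"
  assumes b0: "b $ 0 = 0"
  shows "fps_deriv (a oo b) = (fps_deriv a oo b) * fps_deriv b"
proof (rule fps_ext)
  fix n
  have "fps_deriv (a oo b) $ n = (\<Sum>i\<le>Suc n. a $ i * fps_deriv (b ^ i) $ n)"
    by (simp add: fps_compose_nth_atMost[OF b0 order.refl] sum_distrib_left mult.left_commute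
        del: sum.atMost_Suc)
  also have "\<dots> = (\<Sum>i\<le>n. a $ Suc i * (of_nat (Suc i) * (b ^ i * fps_deriv b) $ n))"
    unfolding sum.atMost_Suc_shift fps_deriv_power by (simp add: mult.assoc mult.commute[of "fps_deriv b"])
  also have "\<dots> = ((fps_deriv a oo b) * fps_deriv b) $ n"
    using fps_compose_mult_nth[OF b0 order.refl, of "fps_deriv a" "fps_deriv b"]
    by (simp add: mult_ac)
  finally show "fps_deriv (a oo b) $ n = ((fps_deriv a oo b) * fps_deriv b) $ n" .
qed


section \<open>The coefficient ring\<close>

lemma winv_eqI: "x * y = 1 \<Longrightarrow> winv x = y"
  unfolding winv_def by (rule the_equality) (auto, metis mult.assoc mult.commute mult_1_right)

locale witt_ring =
  fixes p :: nat and W :: "'w::comm_ring_1 itself"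
  assumes prime: "prime p" and witt_like: "witt_like p W"
begin

abbreviation P :: 'w where "P \<equiv> of_nat p"

lemma
  shows P_torsion_free: "P * x = 0 \<Longrightarrow> x = 0"
    and not_P_dvd_1: "\<not> P dvd 1"
    and inverse_mod_P: "\<not> P dvd x \<Longrightarrow> \<exists>y. P dvd x * y - 1"
    and P_adic_separated: "(\<And>n. P ^ n dvd x) \<Longrightarrow> x = 0"
    and P_adic_complete: "(\<And>n. P ^ n dvd s (Suc n) - s n) \<Longrightarrow> \<exists>x. \<forall>n. P ^ n dvd x - s n"
  using witt_like unfolding witt_like_def by simp_all

lemma one_minus_P_mult_invertible: "\<exists>y. (1 - P * x) * y = 1"
proof -
  define s where "s n = (\<Sum>j<n. (P * x) ^ j)" for n
  have "P ^ n dvd s (Suc n) - s n" for n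
    by (simp add: s_def power_mult_distrib)
  then obtain y where y: "\<And>n. P ^ n dvd y - s n"
    using P_adic_complete by blast
  have "P ^ n dvd (1 - P * x) * y - 1" for n
  proof -
    have "(1 - P * x) * s n = 1 - (P * x) ^ n"
      unfolding s_def by (simp add: one_diff_power_eq)
    then have "(1 - P * x) * y - 1 = (1 - P * x) * (y - s n) - (P * x) ^ n"
      by (simp add: algebra_simps)
    then show ?thesis
      using y[of n] by (simp add: power_mult_distrib)
  qed
  then show ?thesis
    using P_adic_separated[of "(1 - P * x) * y - 1"] by auto
qed

lemma invertible_if_not_P_dvd:
  assumes "\<not> P dvd x"
  shows "\<exists>y. x * y = 1"
proof -
  obtain y0 k where "x * y0 - 1 = P * k"
    using inverse_mod_P[OF assms] by (auto elim: dvdE)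
  moreover obtain v where "(1 - P * (- k)) * v = 1"
    using one_minus_P_mult_invertible by blast
  ultimately have "x * (y0 * v) = 1"
    by (simp add: algebra_simps)
  then show ?thesis ..
qed

lemma P_dvd_multD:
  assumes "P dvd x * y"
  shows "P dvd x \<or> P dvd y"
proof (rule ccontr)
  assume "\<not> ?thesis"
  then obtain a b where "x * a = 1" "y * b = 1"
    using invertible_if_not_P_dvd by blast
  then have "(x * y) * (a * b) = 1"
    by (simp add: algebra_simps)
  then show False
    using assms not_P_dvd_1 by (metis dvd_mult2)
qed

lemma P_dvd_of_int_iff: "P dvd of_int m \<longleftrightarrow> int p dvd m"
proof
  assume P_dvd: "P dvd of_int m"
  show "int p dvd m"
  proof (rule ccontr)
    assume "\<not> int p dvd m"
    then have "coprime (int p) m"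
      using prime by (simp add: prime_imp_coprime_int prime_nat_iff_prime)
    then obtain s t where "s * int p + t * m = 1"
      by (metis bezout_int coprime_iff_gcd_eq_1)
    then have "of_int s * P + of_int t * of_int m = (1::'w)"
      by (metis of_int_1 of_int_add of_int_mult of_int_of_nat_eq)
    then have "P dvd 1"
      using P_dvd by (metis dvd_add dvd_mult dvd_triv_right)
    then show False
      using not_P_dvd_1 by simp
  qed
qed (auto elim!: dvdE)

lemma P_dvd_of_nat_iff: "P dvd of_nat m \<longleftrightarrow> p dvd m"
  using P_dvd_of_int_iff[of "int m"] by simp

lemma P_dvd_of_nat_diff_iff: "P dvd of_nat a - of_nat b \<longleftrightarrow> [a = b] (mod p)"
  using P_dvd_of_int_iff[of "int a - int b"]
  by (simp add: cong_iff_dvd_diff flip: cong_int_iff)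

lemma P_power_mult_cancel: "P ^ k * x = 0 \<Longrightarrow> x = 0"
  by (induction k) (auto simp: mult.assoc dest: P_torsion_free)

lemma of_nat_mult_cancel:
  assumes "m > 0" and "of_nat m * x = of_nat m * (y::'w)"
  shows "x = y"
proof -
  obtain a u where m: "m = p ^ a * u" and "\<not> p dvd u"
    using multiplicity_decompose'[of m p] assms(1) prime not_prime_unit by blast
  then obtain v where v: "of_nat u * v = (1::'w)"
    using invertible_if_not_P_dvd P_dvd_of_nat_iff by blast
  have "P ^ a * (of_nat u * (x - y)) = of_nat m * x - of_nat m * y"
    by (simp add: m algebra_simps)
  then have "P ^ a * (of_nat u * (x - y)) = 0"
    using assms(2) by (simp only: diff_self)
  then have "of_nat u * (x - y) = 0"
    by (rule P_power_mult_cancel)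
  then have "(of_nat u * v) * (x - y) = 0"
    by (simp add: mult_ac)
  then show ?thesis
    using v by simp
qed

lemma of_nat_neq_0: "m > 0 \<Longrightarrow> (of_nat m :: 'w) \<noteq> 0"
  using of_nat_mult_cancel[of m 1 0] not_P_dvd_1 by auto

lemma P_power_mult_decompose:
  assumes "x \<noteq> 0"
  obtains n u where "x = P ^ n * u" and "\<not> P dvd u"
proof -
  have ex: "\<exists>n. \<not> P ^ n dvd x"
    using P_adic_separated assms by blast
  define n where "n = (LEAST n. \<not> P ^ n dvd x)"
  have n: "\<not> P ^ n dvd x"
    unfolding n_def by (rule LeastI_ex[OF ex])
  then obtain m where m: "n = Suc m"
    by (cases n) auto
  then have "P ^ m dvd x"
    using not_less_Least[of m "\<lambda>n. \<not> P ^ n dvd x"] n_def by auto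
  then obtain u where u: "x = P ^ m * u"
    by (auto elim: dvdE)
  moreover have "\<not> P dvd u"
  proof
    assume "P dvd u"
    then have "P ^ m * P dvd P ^ m * u"
      by (rule mult_dvd_mono[OF dvd_refl])
    then show False
      using n u m by (simp add: mult.commute)
  qed
  ultimately show ?thesis ..
qed

lemma no_zero_divisors:
  assumes "x * y = (0::'w)"
  shows "x = 0 \<or> y = 0"
proof (rule ccontr)
  assume "\<not> ?thesis"
  then obtain n u m v where "x = P ^ n * u" "\<not> P dvd u" "y = P ^ m * v" "\<not> P dvd v"
    by (metis P_power_mult_decompose)
  then have "P ^ (n + m) * (u * v) = 0" and "\<not> P dvd u * v"
    using assms P_dvd_multD by (auto simp: power_add algebra_simps)
  then show False
    using P_power_mult_cancel by fastforce
qed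

end


section \<open>Teichmueller lifts and the roots of unity\<close>

lemma dvd_power_diff:
  fixes x y :: "'a::comm_ring_1"
  shows "x - y dvd x ^ n - y ^ n"
  unfolding power_diff_sumr2 by simp

lemma power_power_commute: "(x ^ a) ^ b = (x ^ b) ^ (a::nat)" for x :: "'a::monoid_mult"
  by (simp flip: power_mult add: mult.commute)

lemma dvd_pred_mult_add_iff:
  fixes i j q :: nat
  assumes "i < q" and "j < q"
  shows "q dvd (q - 1) * i + j \<longleftrightarrow> i = j"
proof
  assume "q dvd (q - 1) * i + j"
  then obtain k where "(q - 1) * i + j = q * k" ..
  then have "((q - 1) * i + j + i) mod q = i"
    using assms(1) by simp
  moreover have "(q - 1) * i + j + i = q * i + j"
    using assms(1) by (cases q) auto
  ultimately have "(q * i + j) mod q = i"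
    by (simp only:)
  then show "i = j"
    using assms(2) by simp
next
  assume "i = j"
  then have "(q - 1) * i + j = q * i"
    using assms(1) by (cases q) auto
  then show "q dvd (q - 1) * i + j"
    by simp
qed

context witt_ring
begin

text \<open>\<open>x\<^sup>p - y\<^sup>p = (x - y) S\<close> with \<open>S \<equiv> p y\<^sup>p\<^sup>-\<^sup>1 \<equiv> 0\<close> modulo \<open>P\<close>.\<close>
lemma P_power_Suc_dvd_power_p_diff:
  assumes "P dvd x - y" and "P ^ k dvd x - y"
  shows "P ^ Suc k dvd x ^ p - y ^ p"
proof -
  define S where "S u = (\<Sum>i<p. y ^ (p - Suc i) * u ^ i)" for u
  have "P dvd S x - S y"
    unfolding S_def sum_subtractf[symmetric] right_diff_distrib[symmetric]
    by (intro dvd_sum dvd_mult dvd_trans[OF assms(1) dvd_power_diff])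
  moreover have "S y = P * y ^ (p - 1)"
  proof -
    have "y ^ (p - Suc i) * y ^ i = y ^ (p - 1)" if "i < p" for i
      using that by (simp flip: power_add)
    then show ?thesis
      unfolding S_def by simp
  qed
  ultimately have "P dvd S x"
    by (metis dvd_diff_commute dvd_triv_left dvd_add_right_iff diff_add_cancel)
  with assms(2) have "P ^ k * P dvd (x - y) * S x"
    by (rule mult_dvd_mono)
  then show ?thesis
    unfolding S_def power_diff_sumr2[symmetric] by (simp add: mult.commute)
qed

lemma P_power_dvd_power_p_power_diff:
  assumes "P dvd x - y"
  shows "P ^ Suc n dvd x ^ (p ^ n) - y ^ (p ^ n)"
proof (induction n)
  case (Suc n)
  then have "P dvd x ^ (p ^ n) - y ^ (p ^ n)"
    by (metis dvd_power dvd_trans zero_less_Suc)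
  from P_power_Suc_dvd_power_p_diff[OF this Suc.IH] show ?case
    by (simp add: power_mult[symmetric] mult.commute)
qed (use assms in simp)

text \<open>The closure of \<open>\<int>\<close> in \<open>W\<close>, that is, \<open>\<int>\<^sub>p\<close>.\<close>
definition p_adic_integer :: "'w \<Rightarrow> bool" where
  "p_adic_integer z \<longleftrightarrow> (\<forall>n. \<exists>m. P ^ n dvd z - of_nat m)"

lemma p_adic_integer_mult:
  assumes "p_adic_integer w" and "p_adic_integer z"
  shows "p_adic_integer (w * z)"
  unfolding p_adic_integer_def
proof
  fix n
  obtain a b where "P ^ n dvd w - of_nat a" and "P ^ n dvd z - of_nat b"
    using assms unfolding p_adic_integer_def by blast
  moreover have "w * z - of_nat (a * b) = w * (z - of_nat b) + of_nat b * (w - of_nat a)"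
    by (simp add: algebra_simps)
  ultimately show "\<exists>m. P ^ n dvd w * z - of_nat m"
    by (metis dvd_add dvd_mult)
qed

lemma p_adic_integer_power: "p_adic_integer z \<Longrightarrow> p_adic_integer (z ^ k)"
proof (induction k)
  case 0
  have "P ^ n dvd 1 - of_nat 1" for n
    by simp
  then show ?case
    unfolding p_adic_integer_def by (metis power_0)
qed (simp add: p_adic_integer_mult)

lemma teichmueller_limit:
  assumes x_p: "P dvd x ^ p - x"
  obtains t where "t ^ p = t" and "\<And>n. P ^ n dvd t - x ^ (p ^ n)"
proof -
  define s where "s n = x ^ (p ^ n)" for n
  have s_Suc: "s n ^ p = s (Suc n)" for n
    by (simp add: s_def power_mult[symmetric] mult.commute)
  have s_diff: "P ^ Suc n dvd s (Suc n) - s n" for n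
    using P_power_dvd_power_p_power_diff[OF x_p, of n]
    by (simp add: s_def power_mult[symmetric] mult.commute)
  have "P ^ n dvd s (Suc n) - s n" for n
    by (rule dvd_trans[OF le_imp_power_dvd s_diff[of n]]) simp
  then obtain t where t: "\<And>n. P ^ n dvd t - s n"
    using P_adic_complete by blast
  have t_p_diff: "P ^ Suc (Suc n) dvd t ^ p - t" for n
  proof -
    have "P dvd t - s (Suc n)"
      using dvd_trans[OF _ t[of "Suc n"], of P] by simp
    from P_power_Suc_dvd_power_p_diff[OF this t[of "Suc n"]]
    have "P ^ Suc (Suc n) dvd t ^ p - s (Suc (Suc n))"
      by (simp only: s_Suc)
    from dvd_diff[OF this t[of "Suc (Suc n)"]] show ?thesis
      by simp
  qed
  have "P ^ n dvd t ^ p - t" for n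
    by (rule dvd_trans[OF le_imp_power_dvd t_p_diff[of n]]) simp
  then have "t ^ p = t"
    using P_adic_separated[of "t ^ p - t"] by simp
  with t show ?thesis
    using that unfolding s_def by blast
qed

lemma teichmueller_lift:
  assumes "\<not> p dvd g"
  obtains t where "t ^ (p - 1) = 1" and "P dvd t - of_nat g" and "p_adic_integer t"
proof -
  have "P dvd of_nat (g ^ (p - 1)) - of_nat 1"
    using fermat_theorem[OF prime assms] P_dvd_of_nat_diff_iff by blast
  then have "P dvd of_nat g * (of_nat g ^ (p - 1) - 1)"
    by simp
  also have "of_nat g * (of_nat g ^ (p - 1) - 1) = of_nat g ^ p - (of_nat g :: 'w)"
    using prime_gt_0_nat[OF prime] by (simp add: algebra_simps power_eq_if)
  finally have g_p: "P dvd of_nat g ^ p - (of_nat g :: 'w)" .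
  obtain t where t_p: "t ^ p = t" and t: "\<And>n. P ^ n dvd t - of_nat g ^ (p ^ n)"
    using teichmueller_limit[OF g_p] by blast
  have "P dvd t - of_nat g ^ p"
    using t[of 1] by simp
  from dvd_add[OF this g_p] have t_g: "P dvd t - of_nat g"
    by simp
  have "t \<noteq> 0"
  proof
    assume "t = 0"
    with t_g have "P dvd of_nat g"
      by simp
    with assms show False
      by (simp add: P_dvd_of_nat_iff)
  qed
  moreover have "t * (t ^ (p - 1) - 1) = 0"
    using t_p prime_gt_0_nat[OF prime] by (simp add: algebra_simps power_eq_if)
  ultimately have "t ^ (p - 1) = 1"
    using no_zero_divisors by fastforce
  moreover have "p_adic_integer t"
    unfolding p_adic_integer_def
  proof
    show "\<exists>m. P ^ n dvd t - of_nat m" for n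
      using t[of n] by (intro exI[of _ "g ^ p ^ n"]) simp
  qed
  ultimately show ?thesis
    using t_g that by blast
qed

definition q :: nat where "q = p - 1"

abbreviation G :: "'w set" where "G \<equiv> Gamma_f p"

lemma q_pos: "0 < q"
  using prime_gt_1_nat[OF prime] by (simp add: q_def)

lemma Gamma_f_eq_roots: "G = {z. z ^ q = 1}"
  by (simp add: Gamma_f_def q_def)

lemma primitive_root_of_unity_exists:
  "\<exists>t. t ^ q = 1 \<and> (\<forall>k. 0 < k \<longrightarrow> k < q \<longrightarrow> t ^ k \<noteq> 1) \<and> p_adic_integer t"
proof -
  obtain g where "residue_primroot p g"
    using prime_primitive_root_exists prime prime_gt_1_nat by blast
  then have "coprime p g" and ord: "ord p g = q"
    by (auto simp: residue_primroot_def totient_prime[OF prime] q_def)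
  then have "\<not> p dvd g"
    using prime coprime_absorb_left not_prime_unit by blast
  then obtain t where t: "t ^ q = 1" "P dvd t - of_nat g" "p_adic_integer t"
    unfolding q_def by (rule teichmueller_lift)
  have "t ^ k \<noteq> 1" if "0 < k" "k < q" for k
  proof
    assume "t ^ k = 1"
    have "P dvd t ^ k - of_nat g ^ k"
      using t(2) dvd_power_diff dvd_trans by blast
    with \<open>t ^ k = 1\<close> have "P dvd of_nat (g ^ k) - of_nat 1"
      using dvd_minus_iff[of P "1 - of_nat g ^ k"] by simp
    then have "[g ^ k = 1] (mod p)"
      by (simp only: P_dvd_of_nat_diff_iff)
    with ord_minimal[OF that[unfolded ord[symmetric]]] show False
      by simp
  qed
  with t show ?thesis
    by blast
qed

definition \<omega> :: 'w where
  "\<omega> = (SOME t. t ^ q = 1 \<and> (\<forall>k. 0 < k \<longrightarrow> k < q \<longrightarrow> t ^ k \<noteq> 1) \<and> p_adic_integer t)"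

lemma
  shows omega_power_q: "\<omega> ^ q = 1"
    and omega_power_neq_1: "0 < k \<Longrightarrow> k < q \<Longrightarrow> \<omega> ^ k \<noteq> 1"
    and p_adic_integer_omega: "p_adic_integer \<omega>"
  using someI_ex[OF primitive_root_of_unity_exists] unfolding \<omega>_def[symmetric] by blast+

lemma sum_powers_root_of_unity:
  assumes "u ^ n = 1" and "u \<noteq> 1"
  shows "(\<Sum>k<n. u ^ k) = (0::'w)"
proof -
  have "(u - 1) * (\<Sum>k<n. u ^ k) = 0"
    using assms(1) power_diff_1_eq[of u n] by simp
  from no_zero_divisors[OF this] assms(2) show ?thesis
    by simp
qed

lemma omega_power_mod: "\<omega> ^ k = \<omega> ^ (k mod q)"
proof -
  have "\<omega> ^ k = \<omega> ^ (q * (k div q) + k mod q)"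
    by (simp only: mult_div_mod_eq)
  also have "\<dots> = (\<omega> ^ q) ^ (k div q) * \<omega> ^ (k mod q)"
    by (simp only: power_add power_mult)
  finally show ?thesis
    by (simp add: omega_power_q)
qed

lemma omega_power_eq_1_iff: "\<omega> ^ k = 1 \<longleftrightarrow> q dvd k"
proof -
  have "\<omega> ^ (k mod q) = 1 \<longleftrightarrow> k mod q = 0"
    using omega_power_neq_1[of "k mod q"] q_pos by (cases "k mod q = 0") auto
  then show ?thesis
    by (simp add: omega_power_mod[of k] dvd_eq_mod_eq_0)
qed

lemma one_in_Gamma_f: "1 \<in> G"
  by (simp add: Gamma_f_eq_roots)

lemma mult_in_Gamma_f: "w \<in> G \<Longrightarrow> z \<in> G \<Longrightarrow> w * z \<in> G"
  by (simp add: Gamma_f_eq_roots power_mult_distrib)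

lemma power_in_Gamma_f: "z \<in> G \<Longrightarrow> z ^ k \<in> G"
  by (simp add: Gamma_f_eq_roots power_power_commute[of z k])

lemma omega_in_Gamma_f: "\<omega> \<in> G"
  by (simp add: Gamma_f_eq_roots omega_power_q)

lemma winv_Gamma_f: "z \<in> G \<Longrightarrow> winv z = z ^ (q - 1)"
  using q_pos by (intro winv_eqI) (simp add: Gamma_f_eq_roots flip: power_Suc)

lemma Gamma_f_mult_winv: "z \<in> G \<Longrightarrow> z * winv z = 1"
  using q_pos by (simp add: winv_Gamma_f Gamma_f_eq_roots flip: power_Suc)

lemma winv_in_Gamma_f: "z \<in> G \<Longrightarrow> winv z \<in> G"
  by (simp add: winv_Gamma_f power_in_Gamma_f)

lemma winv_mult_Gamma_f: "w \<in> G \<Longrightarrow> z \<in> G \<Longrightarrow> winv (w * z) = winv w * winv z"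
  by (intro winv_eqI) (metis Gamma_f_mult_winv mult.left_commute mult.assoc mult_1_right)

lemma sum_omega_powers: "(\<Sum>k<q. (\<omega> ^ j) ^ k) = (if q dvd j then of_nat q else 0)"
proof (cases "q dvd j")
  case False
  have "(\<omega> ^ j) ^ q = 1"
    using power_in_Gamma_f[OF omega_in_Gamma_f] by (simp add: Gamma_f_eq_roots)
  with False show ?thesis
    by (simp add: omega_power_eq_1_iff sum_powers_root_of_unity)
next
  case True
  then have "\<omega> ^ j = 1"
    by (simp add: omega_power_eq_1_iff)
  with True show ?thesis
    by simp
qed

text \<open>Otherwise each \<open>z\<^sup>-\<^sup>1 \<omega>\<^sup>k\<close> is a nontrivial root of unity, so the double sum
  \<open>\<Sum>\<^sub>k \<Sum>\<^sub>j (z\<^sup>-\<^sup>1 \<omega>\<^sup>k)\<^sup>j\<close> vanishes, whereas summing over \<open>k\<close> first gives \<open>q \<noteq> 0\<close>.\<close>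
lemma Gamma_f_subset_omega_powers:
  assumes "z \<in> G"
  shows "z \<in> (\<lambda>k. \<omega> ^ k) ` {..<q}"
proof (rule ccontr)
  assume z_notin: "z \<notin> (\<lambda>k. \<omega> ^ k) ` {..<q}"
  define y where "y = winv z"
  have "(\<Sum>j<q. (y * \<omega> ^ k) ^ j) = 0" if "k < q" for k
  proof (rule sum_powers_root_of_unity)
    have "y * \<omega> ^ k \<in> G"
      unfolding y_def by (intro mult_in_Gamma_f winv_in_Gamma_f power_in_Gamma_f omega_in_Gamma_f assms)
    then show "(y * \<omega> ^ k) ^ q = 1"
      by (simp add: Gamma_f_eq_roots)
    show "y * \<omega> ^ k \<noteq> 1"
    proof
      assume "y * \<omega> ^ k = 1"
      then have "z = \<omega> ^ k"
        using Gamma_f_mult_winv[OF assms] unfolding y_def by (metis mult.assoc mult_1_left mult_1_right)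
      with z_notin that show False
        by blast
    qed
  qed
  then have "0 = (\<Sum>k<q. \<Sum>j<q. (y * \<omega> ^ k) ^ j)"
    by simp
  also have "\<dots> = (\<Sum>j<q. y ^ j * (\<Sum>k<q. (\<omega> ^ j) ^ k))"
    unfolding sum_distrib_left power_mult_distrib
    by (subst sum.swap) (intro sum.cong refl arg_cong2[where f = "(*)"] power_power_commute)
  also have "\<dots> = (\<Sum>j<q. if j = 0 then of_nat q else 0)"
    by (intro sum.cong refl) (auto simp: sum_omega_powers dest: dvd_imp_le)
  also have "\<dots> = of_nat q"
    using q_pos by simp
  finally show False
    using of_nat_neq_0[OF q_pos] by simp
qed

lemma Gamma_f_eq: "G = (\<lambda>k. \<omega> ^ k) ` {..<q}"
  using Gamma_f_subset_omega_powers power_in_Gamma_f[OF omega_in_Gamma_f] by blast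

lemma inj_on_omega_power: "inj_on (\<lambda>k. \<omega> ^ k) {..<q}"
proof -
  have "a = b" if "a \<le> b" "b < q" "\<omega> ^ a = \<omega> ^ b" for a b
  proof -
    have "\<omega> ^ a * winv (\<omega> ^ a) = 1"
      by (intro Gamma_f_mult_winv power_in_Gamma_f omega_in_Gamma_f)
    moreover have "\<omega> ^ b = \<omega> ^ a * \<omega> ^ (b - a)"
      using \<open>a \<le> b\<close> by (simp flip: power_add)
    ultimately have "\<omega> ^ (b - a) = 1"
      using \<open>\<omega> ^ a = \<omega> ^ b\<close> by (metis mult.assoc mult.commute mult_1_left)
    then show "a = b"
      using that omega_power_neq_1[of "b - a"] by (cases "a = b") auto
  qed
  then show ?thesis
    by (intro inj_onI) (metis lessThan_iff nat_le_linear)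
qed

lemma finite_Gamma_f: "finite G"
  by (simp add: Gamma_f_eq)

lemma card_Gamma_f: "card G = q"
  by (simp add: Gamma_f_eq card_image[OF inj_on_omega_power])

lemma sum_Gamma_f: "(\<Sum>z\<in>G. f z) = (\<Sum>k<q. f (\<omega> ^ k))"
  unfolding Gamma_f_eq by (rule sum.reindex[OF inj_on_omega_power, unfolded comp_def])

lemma p_adic_integer_Gamma_f: "z \<in> G \<Longrightarrow> p_adic_integer z"
  using Gamma_f_eq p_adic_integer_power[OF p_adic_integer_omega] by auto

lemma winv_q_mult_q: "winv (of_nat q) * of_nat q = (1::'w)"
proof -
  have "\<not> p dvd q"
    using q_pos by (auto simp: q_def dest: dvd_imp_le)
  then obtain y where "of_nat q * y = (1::'w)"
    using invertible_if_not_P_dvd P_dvd_of_nat_iff by blast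
  then show ?thesis
    by (simp add: winv_eqI mult.commute)
qed

lemma bij_betw_mult_Gamma_f:
  assumes "w \<in> G"
  shows "bij_betw (\<lambda>z. z * w) G G"
proof (rule bij_betwI[where g = "\<lambda>z. z * winv w"])
  have w: "w * winv w = 1"
    using Gamma_f_mult_winv[OF assms] .
  show "(\<lambda>z. z * w) \<in> G \<rightarrow> G" and "(\<lambda>z. z * winv w) \<in> G \<rightarrow> G"
    using assms by (auto intro: mult_in_Gamma_f winv_in_Gamma_f)
  show "z * w * winv w = z" and "z * winv w * w = z" for z
    by (simp_all only: mult.assoc mult.commute[of "winv w" w] w mult_1_right)
qed

lemma sum_Gamma_f_power: "(\<Sum>z\<in>G. z ^ j) = (if q dvd j then of_nat q else 0)"
  unfolding sum_Gamma_f power_power_commute[of \<omega> _ j] by (rule sum_omega_powers)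

lemma sum_powers_Gamma_f:
  assumes "y \<in> G"
  shows "(\<Sum>k<q. y ^ k) = (if y = 1 then of_nat q else 0)"
  using assms sum_powers_root_of_unity by (simp add: Gamma_f_eq_roots)

lemma sum_Gamma_f_orthogonal:
  assumes "i < q" and "j < q"
  shows "(\<Sum>z\<in>G. winv z ^ i * z ^ j) = (if i = j then of_nat q else 0)"
proof -
  have "(\<Sum>z\<in>G. winv z ^ i * z ^ j) = (\<Sum>z\<in>G. z ^ ((q - 1) * i + j))"
    by (intro sum.cong refl) (simp add: winv_Gamma_f power_mult power_add)
  also have "\<dots> = (if q dvd (q - 1) * i + j then of_nat q else 0)"
    by (rule sum_Gamma_f_power)
  finally show ?thesis
    using dvd_pred_mult_add_iff[OF assms] by simp
qed

end


section \<open>The binomial series \<open>(1 + \<pi>)\<^sup>\<zeta>\<close>\<close>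

lemma dvd_prod_diff:
  fixes f g :: "'b \<Rightarrow> 'a::comm_ring_1"
  assumes "\<And>j. j \<in> A \<Longrightarrow> d dvd f j - g j"
  shows "d dvd prod f A - prod g A"
  using assms
proof (induction A rule: infinite_finite_induct)
  case (insert x F)
  have "prod f (insert x F) - prod g (insert x F) = f x * (prod f F - prod g F) + (f x - g x) * prod g F"
    using insert.hyps by (simp add: algebra_simps)
  then show ?case using insert by simp
qed auto

lemma cyc_sub_nth_0 [simp]: "cyc_sub z $ 0 = 0"
  by (simp add: cyc_sub_def)

lemma one_plus_X_mult_deriv_nth:
  "((1 + fps_X) * fps_deriv F) $ n = of_nat (Suc n) * F $ Suc n + of_nat n * (F $ n :: 'a::comm_ring_1)"
  by (cases n) (simp_all add: distrib_right)

context witt_ring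
begin

text \<open>Approximate \<open>z\<close> by an integer \<open>M\<close> modulo the \<open>p\<close>-part of \<open>m!\<close>: the falling
  factorial of \<open>M\<close> is divisible by \<open>m!\<close>, and the prime-to-\<open>p\<close> part of \<open>m!\<close> is a unit.\<close>
lemma fact_dvd_falling_factorial:
  assumes "p_adic_integer z"
  shows "\<exists>c. of_nat (fact m) * c = (\<Prod>j<m. z - of_nat j)"
proof -
  obtain a u where fact_m: "fact m = p ^ a * u" and "\<not> p dvd u"
    using multiplicity_decompose'[of "fact m :: nat" p] prime not_prime_unit by (metis fact_nonzero)
  then obtain v where v: "of_nat u * v = (1::'w)"
    using invertible_if_not_P_dvd P_dvd_of_nat_iff by blast
  have fact_m': "(of_nat (fact m) :: 'w) = P ^ a * of_nat u"
    unfolding fact_m by simp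
  have "(of_int (fact m) :: 'w) = of_nat (fact m)"
    by (metis of_int_of_nat_eq of_nat_fact)
  obtain M where "P ^ a dvd z - of_nat M"
    using assms unfolding p_adic_integer_def by blast
  then have "P ^ a dvd (\<Prod>j<m. z - of_nat j) - (\<Prod>j<m. of_nat M - of_nat j)"
    by (intro dvd_prod_diff) simp
  then obtain y where y: "(\<Prod>j<m. z - of_nat j) = (\<Prod>j<m. of_nat M - of_nat j) + P ^ a * y"
    by (auto elim!: dvdE simp: algebra_simps)
  have "fact m dvd (\<Prod>j<m. int M - int j)"
    unfolding atLeast0LessThan[symmetric] gbinomial_int_mult_fact[symmetric] by simp
  then obtain c where "(\<Prod>j<m. int M - int j) = fact m * c" ..
  then have "of_int (\<Prod>j<m. int M - int j) = (of_int (fact m * c) :: 'w)"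
    by (rule arg_cong)
  then have "(\<Prod>j<m. of_nat M - of_nat j) = P ^ a * of_nat u * (of_int c :: 'w)"
    by (simp add: of_int_prod \<open>of_int (fact m) = of_nat (fact m)\<close> fact_m')
  moreover have "P ^ a * y = P ^ a * of_nat u * (v * y)"
    using v by (metis mult.assoc mult_1_left)
  ultimately have "(\<Prod>j<m. z - of_nat j) = P ^ a * of_nat u * (of_int c + v * y)"
    unfolding y distrib_left by (simp only:)
  then show ?thesis
    by (metis fact_m')
qed

lemma fact_mult_wbinom:
  assumes "p_adic_integer z"
  shows "of_nat (fact m) * wbinom z m = (\<Prod>j<m. z - of_nat j)"
proof -
  obtain c where c: "of_nat (fact m) * c = (\<Prod>j<m. z - of_nat j)"
    using fact_dvd_falling_factorial[OF assms] by blast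
  have "wbinom z m = c"
    unfolding wbinom_def
  proof (rule the_equality)
    show "c' = c" if "of_nat (fact m) * c' = (\<Prod>j<m. z - of_nat j)" for c'
      using of_nat_mult_cancel[of "fact m" c' c] that c by simp
  qed (rule c)
  with c show ?thesis
    by simp
qed

lemma wbinom_Suc:
  assumes "p_adic_integer z"
  shows "of_nat (Suc k) * wbinom z (Suc k) = (z - of_nat k) * wbinom z k"
proof (rule of_nat_mult_cancel[of "fact k"])
  show "of_nat (fact k) * (of_nat (Suc k) * wbinom z (Suc k))
      = of_nat (fact k) * ((z - of_nat k) * wbinom z k)"
    using fact_mult_wbinom[OF assms, of "Suc k"] fact_mult_wbinom[OF assms, of k]
    by (simp add: algebra_simps)
qed simp

lemma binomial_series_nth:
  assumes "p_adic_integer z"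
  shows "(1 + cyc_sub z) $ k = wbinom z k"
  using fact_mult_wbinom[OF assms, of 0] by (cases k) (simp_all add: cyc_sub_def)

lemma cyc_sub_nth_1:
  assumes "p_adic_integer z"
  shows "cyc_sub z $ 1 = z"
  using fact_mult_wbinom[OF assms, of 1] by (simp add: cyc_sub_def)

lemma binomial_series_ode:
  assumes "p_adic_integer z"
  shows "(1 + fps_X) * fps_deriv (1 + cyc_sub z) = fps_const z * (1 + cyc_sub z)"
proof (rule fps_ext)
  fix n
  have "of_nat (Suc n) * wbinom z (Suc n) + of_nat n * wbinom z n = z * wbinom z n"
    using wbinom_Suc[OF assms, of n] by (simp add: algebra_simps)
  then show "((1 + fps_X) * fps_deriv (1 + cyc_sub z)) $ n = (fps_const z * (1 + cyc_sub z)) $ n"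
    unfolding one_plus_X_mult_deriv_nth by (simp only: binomial_series_nth[OF assms] fps_mult_left_const_nth)
qed

lemma binomial_ode_unique:
  assumes "F $ 0 = H $ 0"
    and "(1 + fps_X) * fps_deriv F = fps_const c * F"
    and "(1 + fps_X) * fps_deriv H = fps_const c * (H :: 'w fps)"
  shows "F = H"
proof (rule fps_ext)
  fix n
  show "F $ n = H $ n"
  proof (induction n)
    case (Suc n)
    have "of_nat (Suc n) * F $ Suc n = c * F $ n - of_nat n * F $ n"
      using arg_cong[OF assms(2), of "\<lambda>f. f $ n"]
      unfolding one_plus_X_mult_deriv_nth by (simp add: algebra_simps)
    moreover have "of_nat (Suc n) * H $ Suc n = c * H $ n - of_nat n * H $ n"
      using arg_cong[OF assms(3), of "\<lambda>f. f $ n"]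
      unfolding one_plus_X_mult_deriv_nth by (simp add: algebra_simps)
    ultimately show ?case
      using Suc.IH of_nat_mult_cancel[of "Suc n"] by simp
  qed (use assms(1) in simp)
qed

text \<open>\<open>1 + (cyc_sub w oo cyc_sub z)\<close> and \<open>1 + cyc_sub (w z)\<close> both solve
  \<open>(1 + \<pi>) F' = w z F\<close> with \<open>F(0) = 1\<close>, the former by the chain rule.\<close>
lemma cyc_sub_compose:
  assumes w: "p_adic_integer w" and z: "p_adic_integer z"
  shows "cyc_sub w oo cyc_sub z = cyc_sub (w * z)"
proof -
  define F where "F = 1 + cyc_sub w"
  define H where "H = F oo cyc_sub z"
  have H: "H = 1 + (cyc_sub w oo cyc_sub z)"
    by (simp add: H_def F_def fps_compose_add_distrib)
  have X: "(1 + fps_X) oo cyc_sub z = 1 + cyc_sub z"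
    by (simp add: fps_compose_add_distrib)
  have "(1 + fps_X) * fps_deriv H
      = (fps_deriv F oo cyc_sub z) * ((1 + fps_X) * fps_deriv (1 + cyc_sub z))"
    unfolding H_def fps_compose_deriv'[OF cyc_sub_nth_0] by (simp add: ac_simps)
  also have "\<dots> = fps_const z * ((fps_deriv F oo cyc_sub z) * ((1 + fps_X) oo cyc_sub z))"
    unfolding binomial_series_ode[OF z] X by (simp add: ac_simps)
  also have "(fps_deriv F oo cyc_sub z) * ((1 + fps_X) oo cyc_sub z)
      = ((1 + fps_X) * fps_deriv F) oo cyc_sub z"
    by (simp add: fps_compose_mult_distrib' mult.commute)
  also have "\<dots> = fps_const w * H"
    unfolding F_def binomial_series_ode[OF w] H_def by (simp add: fps_const_mult_apply_left)
  finally have "(1 + fps_X) * fps_deriv H = fps_const (w * z) * H"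
    by (simp add: ac_simps flip: fps_const_mult)
  moreover have "H $ 0 = (1 + cyc_sub (w * z)) $ 0"
    by (simp add: H)
  ultimately have "H = 1 + cyc_sub (w * z)"
    using binomial_ode_unique binomial_series_ode[OF p_adic_integer_mult[OF w z]] by blast
  then show ?thesis
    using H by simp
qed

lemma cyc_sub_one: "cyc_sub 1 = (fps_X :: 'w fps)"
proof -
  have "1 + cyc_sub 1 = (1 + fps_X :: 'w fps)"
  proof (rule binomial_ode_unique)
    show "(1 + fps_X) * fps_deriv (1 + cyc_sub 1) = fps_const 1 * (1 + cyc_sub (1::'w))"
      by (rule binomial_series_ode[OF p_adic_integer_Gamma_f[OF one_in_Gamma_f]])
    show "(1 + fps_X) * fps_deriv (1 + fps_X) = fps_const 1 * (1 + fps_X :: 'w fps)"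
      by simp
  qed simp
  then show ?thesis
    by simp
qed

end


section \<open>The action of \<open>\<Gamma>\<^sub>f\<close> and the eigenspace projectors\<close>

lemma fps_const_sum: "fps_const (\<Sum>i\<in>A. f i) = (\<Sum>i\<in>A. fps_const (f i :: 'a::comm_ring_1))"
  by (induction A rule: infinite_finite_induct) (simp_all flip: fps_const_add)

lemma sum_fps_const_mult:
  "(\<Sum>z\<in>A. fps_const (f z) * X) = fps_const (\<Sum>z\<in>A. f z) * (X :: 'a::comm_ring_1 fps)"
  by (induction A rule: infinite_finite_induct) (simp_all add: distrib_right flip: fps_const_add)

lemma gact_X: "gact z fps_X = cyc_sub z"
  by (simp add: gact_def)

lemma gact_sum [simp]: "gact z (\<Sum>i\<in>A. f i) = (\<Sum>i\<in>A. gact z (f i))"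
  by (simp add: gact_def fps_compose_sum_distrib)

lemma gact_mult [simp]: "gact z (f * g) = gact z f * gact z g"
  by (simp add: gact_def fps_compose_mult_distrib')

lemma gact_power [simp]: "gact z (f ^ k) = gact z f ^ k"
  by (simp add: gact_def fps_compose_power')

lemma gact_0 [simp]: "gact z 0 = 0"
  by (simp add: gact_def)

lemma gact_const [simp]: "gact z (fps_const c) = fps_const c"
  by (simp add: gact_def fps_eq_iff fps_compose_nth sum.atLeast_Suc_atMost)

context witt_ring
begin

lemma gact_gact:
  assumes "p_adic_integer w" and "p_adic_integer z"
  shows "gact z (gact w f) = gact (w * z) f"
  unfolding gact_def
  by (simp add: fps_compose_assoc'[symmetric] cyc_sub_compose[OF assms])

lemma gact_one: "gact 1 f = (f :: 'w fps)"
  by (simp add: gact_def cyc_sub_one)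

lemma gact_nth_subdegree:
  assumes "p_adic_integer z"
  shows "gact z h $ subdegree h = z ^ subdegree h * h $ subdegree h"
proof -
  define m where "m = subdegree h"
  define D where "D = fps_shift 1 (cyc_sub z)"
  have "cyc_sub z = fps_X * D"
    unfolding D_def by (rule fps_ext) simp
  then have "gact z h = (gact z (fps_shift m h) * D ^ m) * fps_X ^ m"
    by (subst subdegree_decompose) (simp add: m_def gact_X power_mult_distrib ac_simps)
  then have "gact z h $ m = (gact z (fps_shift m h) * D ^ m) $ 0"
    by (simp add: fps_X_power_mult_right_nth)
  also have "\<dots> = z ^ m * h $ m"
    using cyc_sub_nth_1[OF assms] by (simp add: D_def gact_def fps_nth_power_0 mult.commute)
  finally show ?thesis
    by (simp add: m_def)
qed

lemma S0_const_mult: "f \<in> S0 p \<Longrightarrow> fps_const c * f \<in> S0 p"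
  by (simp add: S0_def)

lemma S0_sum: "(\<And>i. i \<in> A \<Longrightarrow> f i \<in> S0 p) \<Longrightarrow> (\<Sum>i\<in>A. f i) \<in> S0 p"
  by (simp add: S0_def)

abbreviation q_inv :: 'w where "q_inv \<equiv> winv (of_nat q)"

lemma proj_eq: "proj p i f = fps_const q_inv * (\<Sum>z\<in>G. fps_const (winv z ^ i) * gact z f)"
  by (simp add: proj_def card_Gamma_f)

lemma proj_sum: "proj p i (\<Sum>j\<in>A. f j) = (\<Sum>j\<in>A. proj p i (f j :: 'w fps))"
  unfolding proj_eq by (simp add: sum_distrib_left sum.swap[of _ G])

lemma gact_proj:
  assumes w: "w \<in> G"
  shows "gact w (proj p i f) = fps_const (w ^ i) * proj p i f"
proof -
  have "fps_const (winv z ^ i) * gact (z * w) f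
      = fps_const (w ^ i) * (fps_const (winv (z * w) ^ i) * gact (z * w) f)" if z: "z \<in> G" for z
  proof -
    have "w ^ i * winv (z * w) ^ i = winv z ^ i * (w * winv w) ^ i"
      by (simp only: winv_mult_Gamma_f[OF z w]) (simp add: power_mult_distrib ac_simps)
    then show ?thesis
      using Gamma_f_mult_winv[OF w] by (simp flip: mult.assoc)
  qed
  then have "gact w (proj p i f)
      = fps_const q_inv * (fps_const (w ^ i) * (\<Sum>z\<in>G. fps_const (winv (z * w) ^ i) * gact (z * w) f))"
    unfolding proj_eq using w
    by (simp add: gact_gact p_adic_integer_Gamma_f sum_distrib_left cong: sum.cong)
  also have "(\<Sum>z\<in>G. fps_const (winv (z * w) ^ i) * gact (z * w) f)
      = (\<Sum>z\<in>G. fps_const (winv z ^ i) * gact z f)"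
    using sum.reindex_bij_betw[OF bij_betw_mult_Gamma_f[OF w]] .
  finally show ?thesis
    unfolding proj_eq by (simp add: ac_simps)
qed

lemma sum_proj: "(\<Sum>i<q. proj p i f) = (f :: 'w fps)"
proof -
  have "(\<Sum>i<q. proj p i f) = fps_const q_inv * (\<Sum>z\<in>G. \<Sum>i<q. fps_const (winv z ^ i) * gact z f)"
    unfolding proj_eq by (simp add: sum_distrib_left sum.swap[of _ G])
  also have "\<dots> = fps_const q_inv * (\<Sum>z\<in>G. if z = 1 then fps_const (of_nat q) * f else 0)"
  proof (intro arg_cong2[where f = "(*)"] refl sum.cong)
    fix z assume z: "z \<in> G"
    have "winv z = 1 \<longleftrightarrow> z = 1"
      using Gamma_f_mult_winv[OF z] by auto
    then show "(\<Sum>i<q. fps_const (winv z ^ i) * gact z f)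
        = (if z = 1 then fps_const (of_nat q) * f else 0)"
      unfolding sum_fps_const_mult
      using sum_powers_Gamma_f[OF winv_in_Gamma_f[OF z]] by (simp add: gact_one)
  qed
  also have "\<dots> = fps_const (q_inv * of_nat q) * f"
    using one_in_Gamma_f finite_Gamma_f by (simp add: mult.assoc flip: fps_const_mult)
  also have "\<dots> = f"
    using winv_q_mult_q by simp
  finally show ?thesis .
qed

definition T :: "'w fps" where "T = proj p 1 fps_X"

lemma gact_T: "w \<in> G \<Longrightarrow> gact w T = fps_const w * T"
  using gact_proj[of w 1 fps_X] by (simp add: T_def)

lemma T_nth_0: "T $ 0 = 0"
  by (simp add: T_def proj_eq fps_sum_nth gact_X)

lemma T_nth_1: "T $ 1 = 1"
proof -
  have "T $ 1 = q_inv * (\<Sum>z\<in>G. z * winv z)"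
    by (simp add: T_def proj_eq fps_sum_nth gact_X cyc_sub_nth_1[unfolded One_nat_def]
        p_adic_integer_Gamma_f mult.commute cong: sum.cong)
  also have "\<dots> = q_inv * of_nat q"
    by (simp add: Gamma_f_mult_winv card_Gamma_f)
  finally show ?thesis
    using winv_q_mult_q by simp
qed

lemma T_eq_X_mult_unit: obtains U V where "T = fps_X * U" and "U * V = 1"
proof
  show "T = fps_X * fps_shift 1 T"
    by (rule fps_ext) (simp add: T_nth_0)
  show "fps_shift 1 T * fps_right_inverse (fps_shift 1 T) 1 = 1"
    by (rule fps_right_inverse) (simp add: T_nth_1[unfolded One_nat_def])
qed

lemma T_power_mult_cancel:
  assumes "T ^ i * D = 0"
  shows "D = 0"
proof -
  obtain U V where T: "T = fps_X * U" and UV: "U * V = 1"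
    by (rule T_eq_X_mult_unit)
  have "fps_X ^ i * D = fps_X ^ i * D * (U * V) ^ i"
    using UV by simp
  also have "\<dots> = T ^ i * D * V ^ i"
    unfolding T by (simp add: power_mult_distrib ac_simps)
  finally have "fps_X ^ i * D = 0"
    using assms by simp
  show "D = 0"
  proof (rule fps_ext)
    show "D $ n = 0 $ n" for n
      using arg_cong[OF \<open>fps_X ^ i * D = 0\<close>, of "\<lambda>f. f $ (n + i)"]
      by (simp add: fps_X_power_mult_nth)
  qed
qed

lemma T_power_dvd:
  assumes "i \<le> subdegree h"
  shows "\<exists>A. h = T ^ i * A"
proof -
  obtain U V where T: "T = fps_X * U" and UV: "U * V = 1"
    by (rule T_eq_X_mult_unit)
  have "T ^ i * (fps_shift i h * V ^ i) = fps_shift i h * fps_X ^ i * (U * V) ^ i"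
    unfolding T by (simp add: power_mult_distrib ac_simps)
  also have "\<dots> = h"
    using UV subdegree_decompose'[OF assms] by simp
  finally show ?thesis
    by metis
qed

lemma T_power_nth_self: "(T ^ i) $ i = 1"
proof -
  obtain U V where T: "T = fps_X * U" and "U * V = 1"
    by (rule T_eq_X_mult_unit)
  have "U $ 0 = 1"
    using T_nth_1 unfolding T by (simp add: fps_X_mult_nth)
  then show ?thesis
    by (simp add: T power_mult_distrib fps_X_power_mult_nth fps_nth_power_0)
qed

text \<open>The lowest coefficient of \<open>h\<close> sits in a degree \<open>m\<close> with \<open>\<omega>\<^sup>m = \<omega>\<^sup>i\<close>, so
  \<open>i \<le> m\<close> and \<open>T\<^sup>i\<close> divides \<open>h\<close>; the quotient is invariant.\<close>
lemma eigenvector_eq_T_power_mult: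
  assumes "i < q" and eigen: "\<And>w. w \<in> G \<Longrightarrow> gact w h = fps_const (w ^ i) * h"
  shows "\<exists>A\<in>S0 p. h = T ^ i * A"
proof (cases "h = 0")
  case True
  then show ?thesis
    by (intro bexI[of _ 0]) (simp_all add: S0_def)
next
  case False
  define m where "m = subdegree h"
  have "\<omega> ^ m * h $ m = \<omega> ^ i * h $ m"
    using gact_nth_subdegree[OF p_adic_integer_omega, of h] eigen[OF omega_in_Gamma_f]
    by (simp add: m_def)
  then have "(\<omega> ^ m - \<omega> ^ i) * h $ m = 0"
    by (simp add: algebra_simps)
  with False have "\<omega> ^ (m mod q) = \<omega> ^ i"
    using no_zero_divisors omega_power_mod[of m] by (fastforce simp: m_def)
  then have "m mod q = i"
    using inj_on_omega_power q_pos \<open>i < q\<close> by (auto dest: inj_onD)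
  then obtain A where hA: "h = T ^ i * A"
    using T_power_dvd[of i h] by (metis m_def mod_less_eq_dividend)
  have "gact w A = A" if w: "w \<in> G" for w
  proof -
    have "T ^ i * (fps_const (w ^ i) * (gact w A - A)) = 0"
      using eigen[OF w] by (simp add: hA gact_T[OF w] power_mult_distrib algebra_simps)
    then have "fps_const (w ^ i) * (gact w A - A) = 0"
      by (rule T_power_mult_cancel)
    then have "fps_const (winv w ^ i) * (fps_const (w ^ i) * (gact w A - A)) = 0"
      by simp
    moreover have "winv w ^ i * w ^ i = 1"
      using Gamma_f_mult_winv[OF w] by (metis mult.commute power_mult_distrib power_one)
    ultimately show ?thesis
      by (simp flip: mult.assoc)
  qed
  then show ?thesis
    using hA by (auto simp: S0_def)
qed

lemma proj_T_power_mult: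
  assumes "i < q" and "j < q" and "B \<in> S0 p"
  shows "proj p i (T ^ j * B) = (if i = j then T ^ j * B else 0)"
proof -
  have "fps_const (winv z ^ i) * gact z (T ^ j * B) = fps_const (winv z ^ i * z ^ j) * (T ^ j * B)"
    if "z \<in> G" for z
  proof -
    have "gact z (T ^ j * B) = fps_const (z ^ j) * T ^ j * B"
      using assms(3) that by (simp add: S0_def gact_T power_mult_distrib)
    then show ?thesis
      by (simp flip: mult.assoc)
  qed
  then have "proj p i (T ^ j * B)
      = fps_const q_inv * (\<Sum>z\<in>G. fps_const (winv z ^ i * z ^ j) * (T ^ j * B))"
    unfolding proj_eq by (simp cong: sum.cong)
  also have "\<dots> = fps_const (q_inv * (if i = j then of_nat q else 0)) * (T ^ j * B)"
    unfolding sum_fps_const_mult sum_Gamma_f_orthogonal[OF assms(1,2)]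
    by (simp add: mult.assoc flip: fps_const_mult)
  also have "\<dots> = (if i = j then T ^ j * B else 0)"
    using winv_q_mult_q by simp
  finally show ?thesis .
qed

end


section \<open>The normal basis\<close>

context witt_ring
begin

definition E :: "'w fps" where "E = (\<Sum>j<q. T ^ j)"

lemma proj_E: "i < q \<Longrightarrow> proj p i E = T ^ i"
  using proj_T_power_mult[of i _ 1] by (simp add: E_def proj_sum S0_def gact_def)

lemma sum_gact_E: "(\<Sum>z\<in>G. a z * gact z E) = (\<Sum>j<q. T ^ j * (\<Sum>z\<in>G. fps_const (z ^ j) * a z))"
proof -
  have "(\<Sum>z\<in>G. a z * gact z E) = (\<Sum>z\<in>G. \<Sum>j<q. T ^ j * (fps_const (z ^ j) * a z))"
    by (intro sum.cong refl) (simp add: E_def gact_T power_mult_distrib sum_distrib_left mult_ac)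
  then show ?thesis
    by (simp add: sum.swap[of _ G] sum_distrib_left)
qed

lemma fourier_transform_of_inverse:
  assumes "j < q"
  shows "(\<Sum>z\<in>G. fps_const (z ^ j) * (fps_const q_inv * (\<Sum>i<q. fps_const (winv z ^ i) * A i))) = A j"
proof -
  have "(\<Sum>z\<in>G. fps_const (z ^ j) * (fps_const q_inv * (\<Sum>i<q. fps_const (winv z ^ i) * A i)))
      = fps_const q_inv * (\<Sum>i<q. (\<Sum>z\<in>G. fps_const (winv z ^ i * z ^ j)) * A i)"
    by (simp add: sum_distrib_left sum_distrib_right sum.swap[of _ G] mult_ac)
  also have "\<dots> = fps_const q_inv * (\<Sum>i<q. if i = j then fps_const (of_nat q) * A i else 0)"
    by (intro arg_cong2[where f = "(*)"] refl sum.cong)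
      (simp_all add: sum_Gamma_f_orthogonal[OF _ assms] flip: fps_const_sum)
  also have "\<dots> = A j"
    using assms winv_q_mult_q by (simp add: mult.assoc[symmetric])
  finally show ?thesis .
qed

lemma fourier_inverse_of_transform:
  assumes "z \<in> G"
  shows "fps_const q_inv * (\<Sum>i<q. fps_const (winv z ^ i) * (\<Sum>w\<in>G. fps_const (w ^ i) * a w)) = a z"
proof -
  have "(\<Sum>i<q. fps_const (winv z ^ i) * (\<Sum>w\<in>G. fps_const (w ^ i) * a w))
      = (\<Sum>w\<in>G. fps_const (\<Sum>i<q. (winv z * w) ^ i) * a w)"
    by (simp add: sum_distrib_left sum_distrib_right sum.swap[of _ G] power_mult_distrib mult_ac
        fps_const_sum)
  also have "\<dots> = (\<Sum>w\<in>G. if w = z then fps_const (of_nat q) * a w else 0)"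
  proof (rule sum.cong[OF refl])
    fix w assume w: "w \<in> G"
    have "winv z * w = 1 \<longleftrightarrow> w = z"
      using Gamma_f_mult_winv[OF assms] by (metis mult.assoc mult.commute mult_1_right)
    then show "fps_const (\<Sum>i<q. (winv z * w) ^ i) * a w = (if w = z then fps_const (of_nat q) * a w else 0)"
      using sum_powers_Gamma_f[OF mult_in_Gamma_f[OF winv_in_Gamma_f[OF assms] w]] by auto
  qed
  also have "\<dots> = fps_const (of_nat q) * a z"
    using assms finite_Gamma_f by simp
  finally show ?thesis
    using winv_q_mult_q by (simp add: mult.assoc[symmetric])
qed

lemma span_gact_E: "\<exists>a. (\<forall>z\<in>G. a z \<in> S0 p) \<and> f = (\<Sum>z\<in>G. a z * gact z E)"
proof -
  have "\<forall>i. \<exists>A. i < q \<longrightarrow> A \<in> S0 p \<and> proj p i f = T ^ i * A"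
    using eigenvector_eq_T_power_mult gact_proj by blast
  then obtain A where A: "\<And>i. i < q \<Longrightarrow> A i \<in> S0 p" "\<And>i. i < q \<Longrightarrow> proj p i f = T ^ i * A i"
    by metis
  define a where "a z = fps_const q_inv * (\<Sum>i<q. fps_const (winv z ^ i) * A i)" for z
  have "a z \<in> S0 p" for z
    unfolding a_def using A(1) by (intro S0_const_mult S0_sum) simp
  moreover have "(\<Sum>z\<in>G. a z * gact z E) = f"
  proof -
    have "(\<Sum>z\<in>G. a z * gact z E) = (\<Sum>j<q. T ^ j * A j)"
      unfolding sum_gact_E a_def by (rule sum.cong[OF refl]) (simp add: fourier_transform_of_inverse)
    also have "\<dots> = (\<Sum>j<q. proj p j f)"
      by (rule sum.cong[OF refl]) (simp add: A(2))
    finally show ?thesis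
      using sum_proj by simp
  qed
  ultimately show ?thesis
    by metis
qed

lemma gact_E_independent:
  assumes "\<forall>z\<in>G. a z \<in> S0 p" and "(\<Sum>z\<in>G. a z * gact z E) = 0"
  shows "\<forall>z\<in>G. a z = 0"
proof
  define B where "B j = (\<Sum>z\<in>G. fps_const (z ^ j) * a z)" for j
  have "B i = 0" if "i < q" for i
  proof -
    have "T ^ i * B i = proj p i (\<Sum>j<q. T ^ j * B j)"
      using that assms(1) by (simp add: proj_sum proj_T_power_mult B_def S0_const_mult S0_sum)
    also have "(\<Sum>j<q. T ^ j * B j) = 0"
      using assms(2) by (simp add: sum_gact_E B_def)
    also have "proj p i (0 :: 'w fps) = 0"
      by (simp add: proj_eq)
    finally show ?thesis
      by (rule T_power_mult_cancel)
  qed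
  then show "a z = 0" if "z \<in> G" for z
    using fourier_inverse_of_transform[OF that, of a] by (simp add: B_def)
qed

lemma not_P_dvd_proj_E:
  assumes "i < q"
  shows "\<not> fps_const P dvd proj p i E"
proof
  assume "fps_const P dvd proj p i E"
  then obtain g where "T ^ i = fps_const P * g"
    using proj_E[OF assms] by (auto elim: dvdE)
  then have "P * g $ i = 1"
    using T_power_nth_self[of i] by simp
  then show False
    using not_P_dvd_1 by (metis dvdI)
qed

end

theorem lemma24:
  fixes p :: nat and W :: "'w::comm_ring_1 itself"
  assumes "prime p" and "odd p" and "witt_like p W"
  shows "\<exists>e :: 'w fps.
    (\<forall>f :: 'w fps. \<exists>a. (\<forall>z\<in>Gamma_f p. a z \<in> S0 p) \<and>
        f = (\<Sum>z\<in>Gamma_f p. a z * gact z e)) \<and>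
    (\<forall>a. (\<forall>z\<in>Gamma_f p. a z \<in> S0 p) \<and> (\<Sum>z\<in>Gamma_f p. a z * gact z e) = 0
        \<longrightarrow> (\<forall>z\<in>Gamma_f p. a z = 0)) \<and>
    (\<forall>i. i \<le> p - 2 \<longrightarrow> \<not> (fps_const (of_nat p) dvd proj p i e))"
proof -
  interpret witt_ring p W
    using assms(1,3) by unfold_locales
  have "i < q" if "i \<le> p - 2" for i
    using that prime_gt_1_nat[OF assms(1)] by (simp add: q_def)
  then show ?thesis
    using span_gact_E gact_E_independent not_P_dvd_proj_E by blast
qed

end
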